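(* (Partial complement.) Let $V_1,V_2$ be disjoint finite vertex sets, $E\subseteq\{\{u,w\}:u\in V_1,w\in V_2\}$, and let $S_1\subseteq V_1$, $S_2\subseteq V_2$ be nonempty subsets. Let $s_1,s_2$ be two additional vertices and consider either of the graphs (a) on $V_1\cup V_2\cup\{s_1,s_2\}$ with edges $E\cup\{\{s_1,s_2\}\}\cup\{\{v,s_2\}:v\in S_1\}\cup\{\{w,s_1\}:w\in S_2\}$, or (b) on $V_1\cup V_2\cup\{s_1,s_2\}$ with edges $E\cup\{\{s_1,s_2\}\}\cup\{\{v,s_1\}:v\in S_1\}\cup\{\{w,s_2\}:w\in S_2\}$. Then the corresponding graph state can be transformed by LOCC (single-qubit Pauli measurements on $s_1$ and $s_2$ followed by outcome-dependent local unitary corrections on the remaining qubits) into the graph state of the graph on $V_1\cup V_2$ whose edge set is obtained from $E$ by complementing exactly the pairs in $S_1\times S_2$, namely $$\big(E\setminus\{\{u,w\}:u\in S_1,w\in S_2\}\big)\;\cup\;\{\{u,w\}:u\in S_1,\ w\in S_2,\ \{u,w\}\notin E\};$$ in particular every inter-link of $E$ incident to a vertex outside $S_1\cup S_2$ is retained unchanged.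
   Context: For a simple graph $G=(V,E)$, the graph state $|G\rangle$ is the $|V|$-qubit state $\prod_{\{a,b\}\in E} CZ_{ab}\,|+\rangle^{\otimes |V|}$, one qubit per vertex. Two QLANs are modeled by disjoint vertex sets $V_1,V_2$; inter-links are edges between $V_1$ and $V_2$. LOCC means local operations on individual qubits together with classical communication. *)

theory Defs
  imports Complex_Main
begin

text \<open>Computational basis states of the qubits indexed by a vertex set V:
  assignments x of a bit to each vertex, with x v = False outside V.
  A (pure, unnormalised) state of the qubits in V is a function from such
  assignments to complex amplitudes (zero outside basis_states V).
  Bit False = |0>, bit True = |1>.\<close>

definition basis_states :: "'a set \<Rightarrow> ('a \<Rightarrow> bool) set" where
  "basis_states V = {x. \<forall>v. v \<notin> V \<longrightarrow> \<not> x v}"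

text \<open>Graph state |G> = prod_{e in E} CZ_e |+>^{\<otimes> V}; edges are 2-element
  sets of vertices. Amplitude of |x> is (-1)^(number of edges with both ends 1)
  divided by sqrt(2^|V|).\<close>

definition graph_state :: "'a set \<Rightarrow> 'a set set \<Rightarrow> ('a \<Rightarrow> bool) \<Rightarrow> complex" where
  "graph_state V E x =
     (if x \<in> basis_states V
      then (-1) ^ card {e \<in> E. \<forall>v\<in>e. x v} / complex_of_real (sqrt (2 ^ card V))
      else 0)"

text \<open>Single-qubit Pauli observables and their eigenvectors.
  pauli_eigvec P m is the eigenvector of P with eigenvalue (-1)^m
  (m = False: outcome +1, m = True: outcome -1).\<close>

datatype pauli = PX | PY | PZ

definition pauli_mat :: "pauli \<Rightarrow> bool \<Rightarrow> bool \<Rightarrow> complex" where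
  "pauli_mat P i j = (case P of
      PX \<Rightarrow> (if i \<noteq> j then 1 else 0)
    | PY \<Rightarrow> (if i = j then 0 else if i then \<i> else - \<i>)
    | PZ \<Rightarrow> (if i = j then (if i then -1 else 1) else 0))"

definition pauli_eigvec :: "pauli \<Rightarrow> bool \<Rightarrow> bool \<Rightarrow> complex" where
  "pauli_eigvec P m b = (case P of
      PZ \<Rightarrow> (if b = m then 1 else 0)
    | PX \<Rightarrow> (if b \<and> m then -1 else 1) / complex_of_real (sqrt 2)
    | PY \<Rightarrow> (if b then (if m then - \<i> else \<i>) else 1) / complex_of_real (sqrt 2))"

text \<open>Projective measurement of qubit s with outcome vector phi, with the
  measured qubit discarded: the (unnormalised) post-measurement state
  (<phi|_s \<otimes> Id) |psi> of the remaining qubits.\<close>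

definition measure_qubit ::
  "'a \<Rightarrow> (bool \<Rightarrow> complex) \<Rightarrow> (('a \<Rightarrow> bool) \<Rightarrow> complex) \<Rightarrow> ('a \<Rightarrow> bool) \<Rightarrow> complex" where
  "measure_qubit s phi psi x =
     (if x s then 0 else (\<Sum>b\<in>UNIV. cnj (phi b) * psi (x(s := b))))"

text \<open>2x2 unitary matrices (U i j = <i|U|j>).\<close>

definition unitary2 :: "(bool \<Rightarrow> bool \<Rightarrow> complex) \<Rightarrow> bool" where
  "unitary2 U \<longleftrightarrow> (\<forall>i j. (\<Sum>k\<in>UNIV. cnj (U k i) * U k j) = (if i = j then 1 else 0))"

definition apply_local ::
  "'a set \<Rightarrow> ('a \<Rightarrow> bool \<Rightarrow> bool \<Rightarrow> complex) \<Rightarrow> (('a \<Rightarrow> bool) \<Rightarrow> complex) \<Rightarrow> ('a \<Rightarrow> bool) \<Rightarrow> complex" where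
  "apply_local W U psi y =
     (if y \<in> basis_states W
      then (\<Sum>x\<in>basis_states W. (\<Prod>v\<in>W. U v (y v) (x v)) * psi x)
      else 0)"

text \<open>LOCC transformation of the graph state (V,E) into the graph state
  (V - {s1,s2}, E'): single-qubit Pauli measurements on s1 and s2, followed by
  outcome-dependent local unitaries on the remaining qubits, such that for
  every outcome occurring with nonzero probability the resulting state equals
  the target graph state up to normalisation and global phase.\<close>

definition pauli_locc_transform ::
  "'a set \<Rightarrow> 'a set set \<Rightarrow> 'a \<Rightarrow> 'a \<Rightarrow> 'a set set \<Rightarrow> bool" where
  "pauli_locc_transform V E s1 s2 E' \<longleftrightarrow>
     (\<exists>P1 P2. \<forall>m1 m2.
        (let psi = measure_qubit s2 (pauli_eigvec P2 m2)
                     (measure_qubit s1 (pauli_eigvec P1 m1) (graph_state V E))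
         in (\<exists>x. psi x \<noteq> 0) \<longrightarrow>
            (\<exists>U c. (\<forall>v. unitary2 (U v)) \<and> c \<noteq> 0 \<and>
               apply_local (V - {s1, s2}) U psi
                 = (\<lambda>x. c * graph_state (V - {s1, s2}) E' x))))"

end

theory Submission
  imports Defs
begin

text \<open>Write a, b for the bits of the hubs s1, s2 and p, q for the numbers of ones of x in S1, S2.
  The amplitude of the hub graph at x with hub bits a, b is that of E at x times
  (-1)^(ab + bp + aq). Measuring both hubs in the X basis with outcomes m1, m2 sums these
  signs against (-1)^(a m1 + b m2), which collapses to (-1)^((m1 + q)(m2 + p)). The term pq
  is the parity of the pairs of S1 \<times> S2 inside x, i.e. it toggles exactly those edges; the
  terms m1 p and m2 q are undone by Z on S1 resp. S2, leaving the global sign (-1)^(m1 m2).\<close>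

definition two_hub_graph :: "'a set set \<Rightarrow> 'a set \<Rightarrow> 'a set \<Rightarrow> 'a \<Rightarrow> 'a \<Rightarrow> 'a set set" where
  "two_hub_graph E A B s1 s2 =
     E \<union> {{s1, s2}} \<union> {{v, s2} | v. v \<in> A} \<union> {{w, s1} | w. w \<in> B}"

definition partial_complement :: "'a set set \<Rightarrow> 'a set \<Rightarrow> 'a set \<Rightarrow> 'a set set" where
  "partial_complement E A B =
     (E - {{u, w} | u w. u \<in> A \<and> w \<in> B}) \<union> {{u, w} | u w. u \<in> A \<and> w \<in> B \<and> {u, w} \<notin> E}"

lemma sum_UNIV_bool: "(\<Sum>b\<in>(UNIV::bool set). f b) = f True + f False"
  by (simp add: UNIV_bool add.commute)

lemma x_measurement_pair:
  fixes p q :: nat and z :: complex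
  shows "(\<Sum>b\<in>UNIV. cnj (pauli_eigvec PX m2 b) *
           (\<Sum>a\<in>UNIV. cnj (pauli_eigvec PX m1 a) *
              ((-1) ^ (of_bool (a \<and> b) + of_bool b * p + of_bool a * q) * z)))
       = (-1) ^ (of_bool (m1 \<and> m2) + of_bool m1 * p + of_bool m2 * q + p * q) * z"
proof -
  have sqrt2: "complex_of_real (sqrt 2) * complex_of_real (sqrt 2) = 2"
    by (simp flip: of_real_mult)
  have parity: "(-1::complex) ^ p = (if even p then 1 else -1)" "(-1::complex) ^ q = (if even q then 1 else -1)"
    "(-1::complex) ^ (p * q) = (if even p \<or> even q then 1 else -1)"
    by (simp_all add: minus_one_power_iff)
  show ?thesis
    unfolding sum_UNIV_bool pauli_eigvec_def
    by (cases m1; cases m2; cases "even p"; cases "even q";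
        simp add: power_add parity field_simps sqrt2)
qed

lemma finite_basis_states: "finite W \<Longrightarrow> finite (basis_states W)"
proof -
  assume "finite W"
  have "basis_states W \<subseteq> (\<lambda>S v. v \<in> S) ` Pow W"
  proof
    fix x assume "x \<in> basis_states W"
    then have "x = (\<lambda>v. v \<in> {v \<in> W. x v})" "{v \<in> W. x v} \<in> Pow W"
      unfolding basis_states_def by auto
    then show "x \<in> (\<lambda>S v. v \<in> S) ` Pow W" by blast
  qed
  with \<open>finite W\<close> show ?thesis using finite_subset by blast
qed

lemma power_minus_one_card_symdiff:
  assumes "finite X" "finite Z"
  shows "(-1::'b::ring_1) ^ card ((X - Z) \<union> (Z - X)) = (-1) ^ card X * (-1) ^ card Z"
proof -
  have "card ((X - Z) \<union> (Z - X)) = card (X - Z) + card (Z - X)"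
    using assms by (intro card_Un_disjoint) auto
  then have "card X + card Z = card ((X - Z) \<union> (Z - X)) + 2 * card (X \<inter> Z)"
    using card_Int_Diff[OF assms(1), of Z] card_Int_Diff[OF assms(2), of X]
    by (simp add: Int_commute)
  then have "(-1::'b) ^ (card X + card Z) = (-1) ^ card ((X - Z) \<union> (Z - X))"
    by (simp add: power_add power_mult)
  then show ?thesis by (simp add: power_add)
qed

lemma prod_sign_eq_power_card:
  "finite W \<Longrightarrow> (\<Prod>v\<in>W. if P v then -1 else (1::'b::comm_ring_1)) = (-1) ^ card {v \<in> W. P v}"
  by (simp add: prod.If_cases Collect_conj_eq Int_commute)

lemma apply_local_diagonal:
  assumes "finite W" and "\<And>v i j. i \<noteq> j \<Longrightarrow> U v i j = 0"
  shows "apply_local W U psi y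
           = (if y \<in> basis_states W then (\<Prod>v\<in>W. U v (y v) (y v)) * psi y else 0)"
proof (cases "y \<in> basis_states W")
  case True
  have off_diagonal: "(\<Prod>v\<in>W. U v (y v) (x v)) * psi x = 0" if x: "x \<in> basis_states W - {y}" for x
  proof -
    from x have "x \<noteq> y" by blast
    then obtain v where v: "x v \<noteq> y v" by (auto simp: fun_eq_iff)
    with x True have "v \<in> W" unfolding basis_states_def by auto
    with v show ?thesis using assms by (metis mult_eq_0_iff prod_zero_iff)
  qed
  have "(\<Sum>x\<in>basis_states W - {y}. (\<Prod>v\<in>W. U v (y v) (x v)) * psi x) = 0"
    using off_diagonal by (rule sum.neutral[OF ballI])
  then have "(\<Sum>x\<in>basis_states W. (\<Prod>v\<in>W. U v (y v) (x v)) * psi x)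
       = (\<Prod>v\<in>W. U v (y v) (y v)) * psi y"
    using sum.remove[OF finite_basis_states[OF assms(1)] True,
        of "\<lambda>x. (\<Prod>v\<in>W. U v (y v) (x v)) * psi x"] by simp
  then show ?thesis unfolding apply_local_def using True by simp
qed (simp add: apply_local_def)

lemma card_edges_two_hub_graph:
  assumes "finite V0" "E \<subseteq> Pow V0" "A \<subseteq> V0" "B \<subseteq> V0"
    and "s1 \<noteq> s2" "s1 \<notin> V0" "s2 \<notin> V0"
  shows "card {e \<in> two_hub_graph E A B s1 s2. \<forall>v\<in>e. x v}
       = card {e \<in> E. \<forall>v\<in>e. x v} + of_bool (x s1 \<and> x s2)
         + of_bool (x s2) * card {v \<in> A. x v} + of_bool (x s1) * card {v \<in> B. x v}"
proof -
  define inE where "inE = {e \<in> E. \<forall>v\<in>e. x v}"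
  define inHub where "inHub = (if x s1 \<and> x s2 then {{s1, s2}} else {})"
  define inA where "inA = (if x s2 then (\<lambda>v. {v, s2}) ` {v \<in> A. x v} else {})"
  define inB where "inB = (if x s1 then (\<lambda>v. {v, s1}) ` {v \<in> B. x v} else {})"
  have split: "{e \<in> two_hub_graph E A B s1 s2. \<forall>v\<in>e. x v} = inE \<union> inHub \<union> inA \<union> inB"
    unfolding two_hub_graph_def inE_def inHub_def inA_def inB_def by auto
  have "finite E" "finite A" "finite B"
    using assms(1-4) finite_subset by (blast, blast, blast)
  then have finite: "finite inE" "finite inHub" "finite inA" "finite inB"
    unfolding inE_def inHub_def inA_def inB_def by auto
  have disjoint: "inE \<inter> inHub = {}" "(inE \<union> inHub) \<inter> inA = {}" "(inE \<union> inHub \<union> inA) \<inter> inB = {}"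
    unfolding inE_def inHub_def inA_def inB_def using assms by (auto simp: doubleton_eq_iff)
  have "inj_on (\<lambda>v. {v, s2}) A" "inj_on (\<lambda>v. {v, s1}) B"
    using assms by (auto simp: inj_on_def doubleton_eq_iff)
  then have "card inA = of_bool (x s2) * card {v \<in> A. x v}"
    "card inB = of_bool (x s1) * card {v \<in> B. x v}"
    unfolding inA_def inB_def by (auto simp: card_image inj_on_subset)
  moreover have "card inHub = of_bool (x s1 \<and> x s2)" unfolding inHub_def by simp
  ultimately show ?thesis
    unfolding split using finite disjoint by (simp add: card_Un_disjoint inE_def)
qed

lemma graph_state_two_hub_graph:
  assumes "finite V0" "E \<subseteq> Pow V0" "A \<subseteq> V0" "B \<subseteq> V0"
    and "s1 \<noteq> s2" "s1 \<notin> V0" "s2 \<notin> V0" and "\<not> x s1" "\<not> x s2"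
  shows "graph_state (V0 \<union> {s1, s2}) (two_hub_graph E A B s1 s2) (x(s2 := b, s1 := a))
       = (if x \<in> basis_states V0
          then (-1) ^ (of_bool (a \<and> b) + of_bool b * card {v \<in> A. x v} + of_bool a * card {v \<in> B. x v})
               * ((-1) ^ card {e \<in> E. \<forall>v\<in>e. x v} / complex_of_real (sqrt (2 ^ card (V0 \<union> {s1, s2}))))
          else 0)"
proof -
  let ?z = "x(s2 := b, s1 := a)"
  have basis: "?z \<in> basis_states (V0 \<union> {s1, s2}) \<longleftrightarrow> x \<in> basis_states V0"
    using assms unfolding basis_states_def by auto
  have "{e \<in> E. \<forall>v\<in>e. ?z v} = {e \<in> E. \<forall>v\<in>e. x v}"
    using assms(2,6,7) by (auto 0 3)
  moreover have "{v \<in> A. ?z v} = {v \<in> A. x v}" "{v \<in> B. ?z v} = {v \<in> B. x v}"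
    using assms by auto
  ultimately show ?thesis
    unfolding graph_state_def basis card_edges_two_hub_graph[OF assms(1-7)]
    using assms(5) by (simp add: power_add)
qed

lemma measure_hubs_graph_state_two_hub_graph:
  assumes "finite V0" "E \<subseteq> Pow V0" "A \<subseteq> V0" "B \<subseteq> V0"
    and "s1 \<noteq> s2" "s1 \<notin> V0" "s2 \<notin> V0"
  shows "measure_qubit s2 (pauli_eigvec PX m2)
           (measure_qubit s1 (pauli_eigvec PX m1) (graph_state (V0 \<union> {s1, s2}) (two_hub_graph E A B s1 s2))) x
       = (if x \<in> basis_states V0
          then (-1) ^ (of_bool (m1 \<and> m2) + of_bool m1 * card {v \<in> A. x v} + of_bool m2 * card {v \<in> B. x v})
               * ((-1) ^ (card {e \<in> E. \<forall>v\<in>e. x v} + card {v \<in> A. x v} * card {v \<in> B. x v})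
                  / (2 * complex_of_real (sqrt (2 ^ card V0))))
          else 0)"
proof (cases "x s1 \<or> x s2")
  case True
  then have "x \<notin> basis_states V0" using assms unfolding basis_states_def by auto
  with True show ?thesis using assms(5) unfolding measure_qubit_def by auto
next
  case False
  have "sqrt (2 ^ card (V0 \<union> {s1, s2})) = 2 * sqrt (2 ^ card V0)"
    using assms by (simp add: power_add real_sqrt_mult)
  then have norm: "complex_of_real (sqrt (2 ^ card (V0 \<union> {s1, s2}))) = 2 * complex_of_real (sqrt (2 ^ card V0))"
    by simp
  from False have hubs: "\<not> x s1" "\<not> x s2" by auto
  let ?G = "graph_state (V0 \<union> {s1, s2}) (two_hub_graph E A B s1 s2)"
  have measured: "measure_qubit s2 (pauli_eigvec PX m2) (measure_qubit s1 (pauli_eigvec PX m1) ?G) x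
      = (\<Sum>b\<in>UNIV. cnj (pauli_eigvec PX m2 b) *
           (\<Sum>a\<in>UNIV. cnj (pauli_eigvec PX m1 a) * ?G (x(s2 := b, s1 := a))))"
    using False assms(5) unfolding measure_qubit_def by simp
  show ?thesis
  proof (cases "x \<in> basis_states V0")
    case True
    then show ?thesis
      unfolding measured
      by (simp only: graph_state_two_hub_graph[OF assms hubs] if_True x_measurement_pair norm)
        (simp add: power_add)
  qed (unfold measured graph_state_two_hub_graph[OF assms hubs], simp)
qed
lemma partial_complement_swap: "partial_complement E B A = partial_complement E A B"
  unfolding partial_complement_def by (auto simp: insert_commute) (metis insert_commute)+

lemma power_minus_one_card_partial_complement:
  assumes "finite E" "finite A" "finite B" "A \<inter> B = {}"
  shows "(-1::complex) ^ card {e \<in> partial_complement E A B. \<forall>v\<in>e. y v}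
       = (-1) ^ card {e \<in> E. \<forall>v\<in>e. y v} * (-1) ^ (card {v \<in> A. y v} * card {v \<in> B. y v})"
proof -
  define EY where "EY = {e \<in> E. \<forall>v\<in>e. y v}"
  define PY where "PY = {{u, w} | u w. u \<in> A \<and> w \<in> B \<and> y u \<and> y w}"
  have symdiff: "{e \<in> partial_complement E A B. \<forall>v\<in>e. y v} = (EY - PY) \<union> (PY - EY)"
    unfolding partial_complement_def EY_def PY_def by auto
  have "PY = (\<lambda>(u, w). {u, w}) ` ({v \<in> A. y v} \<times> {v \<in> B. y v})"
    unfolding PY_def by auto
  moreover have "inj_on (\<lambda>(u, w). {u, w}) ({v \<in> A. y v} \<times> {v \<in> B. y v})"
    using assms(4) by (auto simp: inj_on_def doubleton_eq_iff)
  ultimately have "card PY = card {v \<in> A. y v} * card {v \<in> B. y v}" "finite PY"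
    using assms(2,3) by (simp_all add: card_image card_cartesian_product)
  moreover have "finite EY" unfolding EY_def using assms(1) by simp
  ultimately show ?thesis
    unfolding symdiff EY_def[symmetric] by (simp add: power_minus_one_card_symdiff)
qed

lemma pauli_locc_transform_two_hub_graph:
  assumes "finite V0" "E \<subseteq> Pow V0" "A \<subseteq> V0" "B \<subseteq> V0" "A \<inter> B = {}"
    and "s1 \<noteq> s2" "s1 \<notin> V0" "s2 \<notin> V0"
  shows "pauli_locc_transform (V0 \<union> {s1, s2}) (two_hub_graph E A B s1 s2) s1 s2 (partial_complement E A B)"
  unfolding pauli_locc_transform_def Let_def
proof (intro exI[of _ PX] allI impI)
  fix m1 m2
  let ?psi = "measure_qubit s2 (pauli_eigvec PX m2)
    (measure_qubit s1 (pauli_eigvec PX m1) (graph_state (V0 \<union> {s1, s2}) (two_hub_graph E A B s1 s2)))"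
  define flipped where "flipped v \<longleftrightarrow> v \<in> A \<and> m1 \<or> v \<in> B \<and> m2" for v
  define U where "U v = (if flipped v then pauli_mat PZ else (\<lambda>i j. of_bool (i = j)))" for v
  define c :: complex where "c = (-1) ^ of_bool (m1 \<and> m2) / 2"
  have unitary: "\<forall>v. unitary2 (U v)"
    unfolding unitary2_def U_def pauli_mat_def sum_UNIV_bool by auto
  have U_diagonal: "U v i j = 0" if "i \<noteq> j" for v i j
    using that unfolding U_def pauli_mat_def by simp
  have "finite E" "finite A" "finite B"
    using assms(1-4) finite_subset by (blast, blast, blast)
  have "apply_local V0 U ?psi y = c * graph_state V0 (partial_complement E A B) y" for y
  proof (cases "y \<in> basis_states V0")
    case True
    let ?p = "card {v \<in> A. y v}" and ?q = "card {v \<in> B. y v}"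
    have "{v \<in> V0. y v \<and> flipped v} = (if m1 then {v \<in> A. y v} else {}) \<union> (if m2 then {v \<in> B. y v} else {})"
      unfolding flipped_def using assms(3,4) by auto
    then have card_flipped: "card {v \<in> V0. y v \<and> flipped v} = of_bool m1 * ?p + of_bool m2 * ?q"
      using assms(5) \<open>finite A\<close> \<open>finite B\<close> by (simp add: card_Un_disjoint disjoint_iff)
    have "(\<Prod>v\<in>V0. U v (y v) (y v)) = (\<Prod>v\<in>V0. if y v \<and> flipped v then -1 else 1)"
      unfolding U_def pauli_mat_def by (intro prod.cong) auto
    also have "\<dots> = (-1) ^ (of_bool m1 * ?p + of_bool m2 * ?q)"
      unfolding prod_sign_eq_power_card[OF assms(1)] card_flipped ..
    finally have correction: "(\<Prod>v\<in>V0. U v (y v) (y v)) = (-1) ^ (of_bool m1 * ?p + of_bool m2 * ?q)" .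
    let ?e = "card {e \<in> E. \<forall>v\<in>e. y v}" and ?r = "complex_of_real (sqrt (2 ^ card V0))"
    have "apply_local V0 U ?psi y = (\<Prod>v\<in>V0. U v (y v) (y v)) * ?psi y"
      using True by (simp add: apply_local_diagonal[OF assms(1) U_diagonal])
    also have "\<dots> = (-1) ^ (of_bool m1 * ?p + of_bool m2 * ?q)
        * ((-1) ^ (of_bool (m1 \<and> m2) + of_bool m1 * ?p + of_bool m2 * ?q) * ((-1) ^ (?e + ?p * ?q) / (2 * ?r)))"
      using True by (simp only: correction measure_hubs_graph_state_two_hub_graph[OF assms(1-4,6-8)] if_True)
    also have "\<dots> = c * ((-1) ^ ?e * (-1) ^ (?p * ?q) / ?r)"
      by (simp add: c_def power_add minus_one_power_iff)
    also have "\<dots> = c * graph_state V0 (partial_complement E A B) y"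
      using True by (simp add: graph_state_def power_minus_one_card_partial_complement[OF \<open>finite E\<close> \<open>finite A\<close> \<open>finite B\<close> assms(5)])
    finally show ?thesis .
  qed (simp add: apply_local_diagonal[OF assms(1) U_diagonal] graph_state_def)
  moreover have "V0 \<union> {s1, s2} - {s1, s2} = V0" using assms(7,8) by auto
  moreover have "c \<noteq> 0" unfolding c_def by simp
  ultimately show "\<exists>U c. (\<forall>v. unitary2 (U v)) \<and> c \<noteq> 0 \<and>
      apply_local (V0 \<union> {s1, s2} - {s1, s2}) U ?psi = (\<lambda>x. c * graph_state (V0 \<union> {s1, s2} - {s1, s2}) (partial_complement E A B) x)"
    using unitary by auto
qed

theorem mainTheorem3:
  fixes V1 V2 S1 S2 :: "'a set" and E :: "'a set set" and s1 s2 :: 'a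
  assumes "finite V1" and "finite V2" and "V1 \<inter> V2 = {}"
    and "E \<subseteq> {{u, w} | u w. u \<in> V1 \<and> w \<in> V2}"
    and "S1 \<subseteq> V1" and "S2 \<subseteq> V2" and "S1 \<noteq> {}" and "S2 \<noteq> {}"
    and "s1 \<noteq> s2" and "s1 \<notin> V1 \<union> V2" and "s2 \<notin> V1 \<union> V2"
  shows
    "pauli_locc_transform (V1 \<union> V2 \<union> {s1, s2})
       (E \<union> {{s1, s2}} \<union> {{v, s2} | v. v \<in> S1} \<union> {{w, s1} | w. w \<in> S2}) s1 s2
       ((E - {{u, w} | u w. u \<in> S1 \<and> w \<in> S2})
          \<union> {{u, w} | u w. u \<in> S1 \<and> w \<in> S2 \<and> {u, w} \<notin> E})
   \<and> pauli_locc_transform (V1 \<union> V2 \<union> {s1, s2})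
       (E \<union> {{s1, s2}} \<union> {{v, s1} | v. v \<in> S1} \<union> {{w, s2} | w. w \<in> S2}) s1 s2
       ((E - {{u, w} | u w. u \<in> S1 \<and> w \<in> S2})
          \<union> {{u, w} | u w. u \<in> S1 \<and> w \<in> S2 \<and> {u, w} \<notin> E})"
proof -
  have setting: "finite (V1 \<union> V2)" "E \<subseteq> Pow (V1 \<union> V2)" "S1 \<subseteq> V1 \<union> V2" "S2 \<subseteq> V1 \<union> V2"
    "s1 \<notin> V1 \<union> V2" "s2 \<notin> V1 \<union> V2"
    using assms by auto
  have "S1 \<inter> S2 = {}" "S2 \<inter> S1 = {}" using assms(3,5,6) by auto
  then have "pauli_locc_transform (V1 \<union> V2 \<union> {s1, s2}) (two_hub_graph E S1 S2 s1 s2) s1 s2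
      (partial_complement E S1 S2)"
    and "pauli_locc_transform (V1 \<union> V2 \<union> {s1, s2}) (two_hub_graph E S2 S1 s1 s2) s1 s2
      (partial_complement E S1 S2)"
    using pauli_locc_transform_two_hub_graph[OF setting(1,2,3,4) _ assms(9) setting(5,6)]
      pauli_locc_transform_two_hub_graph[OF setting(1,2,4,3) _ assms(9) setting(5,6)]
    by (simp_all only: partial_complement_swap)
  moreover have "two_hub_graph E S2 S1 s1 s2
      = E \<union> {{s1, s2}} \<union> {{v, s1} | v. v \<in> S1} \<union> {{w, s2} | w. w \<in> S2}"
    unfolding two_hub_graph_def by blast
  ultimately show ?thesis
    unfolding two_hub_graph_def partial_complement_def by simp
qed

end
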